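(* Let $G=(V,E)$ be a graph on $n$ vertices and define $f:\mathbb{C}^{2n}\to\mathbb{C}^E$ by $$\left(p^{(1)}_v,p^{(2)}_v\right)_{v\in V}\longmapsto\left((p^{(1)}_v-p^{(1)}_u)(p^{(2)}_v-p^{(2)}_u)\right)_{uv\in E}.$$ Then the Zariski closure $\overline{f(\mathbb{C}^{2n})}$ (and consequently $f(\mathbb{C}^{2n})$) is not contained in any linear hyperplane of $\mathbb{C}^E$. *)

theory Defs
  imports Complex_Main
begin

definition cspace :: "'i set \<Rightarrow> ('i \<Rightarrow> complex) set" where
  "cspace I = {x. \<forall>i. i \<notin> I \<longrightarrow> x i = 0}"

inductive_set polyfun :: "'i set \<Rightarrow> (('i \<Rightarrow> complex) \<Rightarrow> complex) set" for I where
  pconst: "(\<lambda>x. c) \<in> polyfun I"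
| pvar: "i \<in> I \<Longrightarrow> (\<lambda>x. x i) \<in> polyfun I"
| padd: "P \<in> polyfun I \<Longrightarrow> Q \<in> polyfun I \<Longrightarrow> (\<lambda>x. P x + Q x) \<in> polyfun I"
| pmult: "P \<in> polyfun I \<Longrightarrow> Q \<in> polyfun I \<Longrightarrow> (\<lambda>x. P x * Q x) \<in> polyfun I"

definition zariski_closure :: "'i set \<Rightarrow> ('i \<Rightarrow> complex) set \<Rightarrow> ('i \<Rightarrow> complex) set" where
  "zariski_closure I S =
     {x \<in> cspace I. \<forall>P \<in> polyfun I. (\<forall>y \<in> S. P y = 0) \<longrightarrow> P x = 0}"

definition linear_hyperplane :: "'i set \<Rightarrow> ('i \<Rightarrow> complex) set \<Rightarrow> bool" where
  "linear_hyperplane I H \<longleftrightarrow>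
     (\<exists>c. (\<exists>i\<in>I. c i \<noteq> 0) \<and> H = {x \<in> cspace I. (\<Sum>i\<in>I. c i * x i) = 0})"

definition simple_graph :: "'a set \<Rightarrow> 'a set set \<Rightarrow> bool" where
  "simple_graph V E \<longleftrightarrow> finite V \<and> (\<forall>e\<in>E. \<exists>u v. u \<in> V \<and> v \<in> V \<and> u \<noteq> v \<and> e = {u, v})"

text \<open>Value on an edge e = {u,v}: (p1 v - p1 u)(p2 v - p2 u); symmetric in u,v,
  so the choice of the ordering is irrelevant.\<close>
definition edge_val :: "('a \<Rightarrow> complex) \<Rightarrow> ('a \<Rightarrow> complex) \<Rightarrow> 'a set \<Rightarrow> complex" where
  "edge_val p1 p2 e =
     (let u = (SOME u. u \<in> e); v = (SOME v. v \<in> e \<and> v \<noteq> u)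
      in (p1 v - p1 u) * (p2 v - p2 u))"

definition fmap :: "'a set set \<Rightarrow> ('a \<Rightarrow> complex) \<Rightarrow> ('a \<Rightarrow> complex) \<Rightarrow> ('a set \<Rightarrow> complex)" where
  "fmap E p1 p2 = (\<lambda>e. if e \<in> E then edge_val p1 p2 e else 0)"

end

theory Submission
  imports Defs
begin

text \<open>Already the image of f, which lies in its Zariski closure, escapes every linear
  hyperplane \<open>\<Sum>\<^sub>e c\<^sub>e x\<^sub>e = 0\<close>: choose an edge \<open>uv\<close> with \<open>c\<^sub>u\<^sub>v \<noteq> 0\<close> and let
  \<open>p1\<close>, \<open>p2\<close> be the point masses at \<open>u\<close> and \<open>v\<close>. The value
  \<open>(p1 b - p1 a) (p2 b - p2 a)\<close> on an edge \<open>ab\<close> vanishes unless \<open>ab\<close> contains both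
  \<open>u\<close> and \<open>v\<close>, so \<open>f(p1, p2)\<close> is \<open>-1\<close> times the coordinate vector of \<open>uv\<close>,
  which lies off the hyperplane.\<close>

lemma edge_val_doubleton:
  assumes "a \<noteq> b"
  shows "edge_val p1 p2 {a, b} = (p1 b - p1 a) * (p2 b - p2 a)"
proof -
  define u where "u = (SOME u. u \<in> {a, b})"
  define v where "v = (SOME v. v \<in> {a, b} \<and> v \<noteq> u)"
  have u: "u \<in> {a, b}"
    unfolding u_def by (rule someI[of _ a]) simp
  have "\<exists>w. w \<in> {a, b} \<and> w \<noteq> u"
    using assms by blast
  then have v: "v \<in> {a, b} \<and> v \<noteq> u"
    unfolding v_def by (rule someI_ex)
  have "(u = a \<and> v = b) \<or> (u = b \<and> v = a)"
    using u v by blast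
  then show ?thesis
    unfolding edge_val_def Let_def u_def [symmetric] v_def [symmetric]
    by (elim disjE) (simp_all add: algebra_simps)
qed

definition point_mass :: "'a \<Rightarrow> 'a \<Rightarrow> complex" where
  "point_mass u = (\<lambda>x. if x = u then 1 else 0)"

lemma edge_val_point_masses:
  assumes "a \<noteq> b" "u \<noteq> v"
  shows "edge_val (point_mass u) (point_mass v) {a, b} =
           (if {a, b} = {u, v} then -1 else 0)"
  using assms by (auto simp: edge_val_doubleton doubleton_eq_iff point_mass_def)

lemma fmap_point_masses:
  assumes "\<forall>e\<in>E. \<exists>a b. a \<noteq> b \<and> e = {a, b}" and "{u, v} \<in> E" and "u \<noteq> v"
  shows "fmap E (point_mass u) (point_mass v) = (\<lambda>e. if e = {u, v} then -1 else 0)"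
proof
  fix e
  show "fmap E (point_mass u) (point_mass v) e = (if e = {u, v} then -1 else 0)"
  proof (cases "e \<in> E")
    case True
    then obtain a b where "a \<noteq> b" "e = {a, b}"
      using assms(1) by blast
    then show ?thesis
      using True assms(3) by (simp add: fmap_def edge_val_point_masses)
  qed (use assms(2) in \<open>auto simp: fmap_def\<close>)
qed

lemma fmap_in_cspace: "fmap E p1 p2 \<in> cspace E"
  by (simp add: cspace_def fmap_def)

lemma point_mass_in_cspace: "u \<in> V \<Longrightarrow> point_mass u \<in> cspace V"
  by (simp add: cspace_def point_mass_def)

lemma subset_zariski_closure:
  assumes "S \<subseteq> cspace I"
  shows "S \<subseteq> zariski_closure I S"
  using assms by (auto simp: zariski_closure_def)

lemma simple_graph_finite_edges:
  assumes "simple_graph V E"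
  shows "finite E"
proof -
  have "E \<subseteq> Pow V"
    using assms by (auto simp: simple_graph_def)
  moreover have "finite V"
    using assms by (simp add: simple_graph_def)
  ultimately show ?thesis
    by (simp add: finite_subset)
qed

lemma linear_hyperplane_avoids_axis:
  assumes "linear_hyperplane I H" and "finite I"
  obtains i where "i \<in> I" and "\<And>t. t \<noteq> 0 \<Longrightarrow> (\<lambda>j. if j = i then t else 0) \<notin> H"
proof -
  obtain c i where "i \<in> I" "c i \<noteq> 0" and H: "H = {x \<in> cspace I. (\<Sum>j\<in>I. c j * x j) = 0}"
    using assms(1) unfolding linear_hyperplane_def by blast
  moreover have "(\<Sum>j\<in>I. c j * (if j = i then t else 0)) = c i * t" for t
    using \<open>i \<in> I\<close> assms(2) by (simp add: if_distrib [of "(*) _"] cong: if_cong)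
  ultimately show ?thesis
    using that by auto
qed

theorem lemma3p8:
  fixes V :: "'a set" and E :: "'a set set"
  assumes "simple_graph V E"
  shows "\<forall>H. linear_hyperplane E H \<longrightarrow>
           \<not> zariski_closure E {fmap E p1 p2 | p1 p2. p1 \<in> cspace V \<and> p2 \<in> cspace V} \<subseteq> H"
proof (intro allI impI notI)
  fix H
  let ?S = "{fmap E p1 p2 | p1 p2. p1 \<in> cspace V \<and> p2 \<in> cspace V}"
  assume "linear_hyperplane E H" and closure_in_H: "zariski_closure E ?S \<subseteq> H"
  then obtain e where "e \<in> E" and avoids: "\<And>t. t \<noteq> 0 \<Longrightarrow> (\<lambda>j. if j = e then t else 0) \<notin> H"
    using linear_hyperplane_avoids_axis simple_graph_finite_edges [OF assms] by metis
  have edges: "\<forall>e\<in>E. \<exists>u v. u \<in> V \<and> v \<in> V \<and> u \<noteq> v \<and> e = {u, v}"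
    using assms by (simp add: simple_graph_def)
  then obtain u v where "u \<in> V" "v \<in> V" "u \<noteq> v" and e: "e = {u, v}"
    using \<open>e \<in> E\<close> by blast
  have "fmap E (point_mass u) (point_mass v) \<in> ?S"
    using \<open>u \<in> V\<close> \<open>v \<in> V\<close> by (blast intro: point_mass_in_cspace)
  also have "?S \<subseteq> zariski_closure E ?S"
    by (rule subset_zariski_closure) (auto intro: fmap_in_cspace)
  also note closure_in_H
  finally have "(\<lambda>j. if j = e then -1 else 0) \<in> H"
    using fmap_point_masses [of E u v] edges \<open>e \<in> E\<close> \<open>u \<noteq> v\<close> e by metis
  with avoids show False
    by simp
qed

end
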